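(* Encode a configuration of the Tower of Hanoi with $n$ disks $1,\dots,n$ (disk $j$ smaller than disk $j+1$) on pegs $0,1,2$ by the word $x_1\dots x_n\in\{0,1,2\}^n$ where disk $j$ lies on peg $x_j$. Let $\Gamma_n$ be the graph with vertex set $\{0,1,2\}^n$ in which $u$ and $v$ are adjacent iff $v=a_{xy}(u)\ne u$ for some $0\le x<y\le2$, where $a_{xy}$ changes the first occurrence in $u$ of either $x$ or $y$ into the other symbol. For distinct $x,y\in\{0,1,2\}$ there is a unique shortest path in $\Gamma_n$ from $x^n$ to $y^n$ (of length $2^n-1$); for $0\le i\le 2^n-1$ let $C^{xy}_i(n)$ be the configuration at distance $i$ from $x^n$ along it. For each ordered pair $(x,y)$ of distinct elements of $\{0,1,2\}$, with $z$ the third element, define maps $q_{xy}$ from binary words to ternary words by $q_{xy}(\emptyset)=\emptyset$, $q_{xy}(0w)=x\,q_{xz}(w)$, $q_{xy}(1w)=y\,q_{zy}(w)$. For $0\le i\le2^n-1$ let $[i]_2$ be the length-$n$ binary representation of $i$, least significant digit first (padded with zeros). Then for all $n\ge1$, all distinct $x,y$, and all $0\le i\le 2^n-1$, \[q_{xy}\big([i]_2^R\big)=\big(C^{xy}_i(n)\big)^R,\] where $R$ denotes word reversal. *)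

theory Defs
  imports Main
begin

text \<open>Tower of Hanoi configurations with n disks on pegs 0,1,2: words of length n over {0,1,2};
  letter j (0-based position j) is the peg of disk j+1.\<close>

definition hwords :: "nat \<Rightarrow> nat list set" where
  "hwords n = {w. length w = n \<and> set w \<subseteq> {0,1,2}}"

fun swap_first :: "nat \<Rightarrow> nat \<Rightarrow> nat list \<Rightarrow> nat list" where
  "swap_first x y [] = []"
| "swap_first x y (c # w) =
     (if c = x then y # w else if c = y then x # w else c # swap_first x y w)"

definition gamma_adj :: "nat \<Rightarrow> nat list \<Rightarrow> nat list \<Rightarrow> bool" where
  "gamma_adj n u v \<longleftrightarrow> u \<in> hwords n \<and> v \<in> hwords n \<and>
     (\<exists>x y. x < y \<and> y \<le> 2 \<and> v = swap_first x y u \<and> v \<noteq> u)"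

definition gamma_path :: "nat \<Rightarrow> nat list \<Rightarrow> nat list \<Rightarrow> nat list list \<Rightarrow> bool" where
  "gamma_path n s t p \<longleftrightarrow> p \<noteq> [] \<and> hd p = s \<and> last p = t \<and> set p \<subseteq> hwords n \<and>
     distinct p \<and> (\<forall>k < length p - 1. gamma_adj n (p ! k) (p ! Suc k))"

definition gamma_shortest_path :: "nat \<Rightarrow> nat list \<Rightarrow> nat list \<Rightarrow> nat list list \<Rightarrow> bool" where
  "gamma_shortest_path n s t p \<longleftrightarrow> gamma_path n s t p \<and>
     (\<forall>p'. gamma_path n s t p' \<longrightarrow> length p \<le> length p')"

definition hanoi_C :: "nat \<Rightarrow> nat \<Rightarrow> nat \<Rightarrow> nat \<Rightarrow> nat list" where
  "hanoi_C x y n i =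
     (THE p. gamma_shortest_path n (replicate n x) (replicate n y) p) ! i"

text \<open>The maps q_xy on binary words (digits 0/1); z = 3 - x - y is the third peg.\<close>
fun qmap :: "nat \<Rightarrow> nat \<Rightarrow> nat list \<Rightarrow> nat list" where
  "qmap x y [] = []"
| "qmap x y (b # w) =
     (if b = 0 then x # qmap x (3 - x - y) w else y # qmap (3 - x - y) y w)"

definition bin_rep :: "nat \<Rightarrow> nat \<Rightarrow> nat list" where
  "bin_rep n i = map (\<lambda>k. i div 2 ^ k mod 2) [0..<n]"

end

theory Submission
  imports Defs
begin

(* The last letter of a word is the peg of the largest disk. In Gamma_(n+1) it can only change
   along an edge between z^n x and z^n y, where z is the third peg, and words with a fixed last
   letter form a copy of Gamma_n. Hence a walk from x^(n+1) to y^(n+1) begins with a walk in the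
   copy with last letter x from x^n to some z^n and ends with a walk in the copy with last letter
   y from some z'^n to y^n; by induction both have at least 2^n vertices, and equality forces
   z = z' to be the third peg and both walks to be the recursive paths. So the unique shortest path
   is hanoi_path, and its i-th vertex is read off from the binary digits of i, most significant
   first, by exactly the recursion defining q_xy. *)

lemma length_append_le_disjoint:
  assumes "xs @ ys = us @ vs" "set xs \<inter> set vs = {}"
  shows "length xs + length vs \<le> length (xs @ ys)"
proof -
  obtain w where "xs = us @ w \<and> w @ ys = vs \<or> xs @ w = us \<and> ys = w @ vs"
    using assms(1) by (auto simp: append_eq_append_conv2)
  then show ?thesis
    using assms(1,2) by (cases w) auto
qed

lemma third_peg:
  fixes x y :: nat
  assumes "x \<le> 2" "y \<le> 2" "x \<noteq> y"
  shows "3 - x - y \<le> 2" "3 - x - y \<noteq> x" "3 - x - y \<noteq> y" "3 - y - x = 3 - x - y"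
  using assms by arith+

lemma hwords_snoc: "a @ [c] \<in> hwords (Suc n) \<longleftrightarrow> a \<in> hwords n \<and> c \<le> 2"
  by (auto simp: hwords_def)

lemma replicate_in_hwords: "c \<le> 2 \<Longrightarrow> replicate n c \<in> hwords n"
  by (auto simp: hwords_def)

lemma swap_first_swap_first: "swap_first x y (swap_first x y u) = u"
  by (induction u) auto

lemma swap_first_snoc:
  "swap_first x y (a @ [c]) =
     (if x \<in> set a \<or> y \<in> set a then swap_first x y a @ [c]
      else a @ [if c = x then y else if c = y then x else c])"
  by (induction a) auto

lemma swap_first_ident: "x \<notin> set a \<Longrightarrow> y \<notin> set a \<Longrightarrow> swap_first x y a = a"
  by (induction a) auto

lemma gamma_adj_commute: "gamma_adj n u v \<longleftrightarrow> gamma_adj n v u"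
  unfolding gamma_adj_def by (metis swap_first_swap_first)

lemma gamma_adj_snoc_same:
  "gamma_adj (Suc n) (a @ [c]) (b @ [c]) \<longleftrightarrow> gamma_adj n a b \<and> c \<le> 2"
proof -
  have "b @ [c] = swap_first x y (a @ [c]) \<and> b \<noteq> a \<longleftrightarrow> b = swap_first x y a \<and> b \<noteq> a" for x y
    by (auto simp: swap_first_snoc swap_first_ident)
  then show ?thesis
    unfolding gamma_adj_def hwords_snoc by auto
qed

lemma gamma_adj_snoc_diff:
  assumes "c \<noteq> d"
  shows "gamma_adj (Suc n) (a @ [c]) (b @ [d]) \<longleftrightarrow>
           c \<le> 2 \<and> d \<le> 2 \<and> a = replicate n (3 - c - d) \<and> b = a"
proof
  assume adj: "gamma_adj (Suc n) (a @ [c]) (b @ [d])"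
  then obtain x y where xy: "x < y" "y \<le> 2" "b @ [d] = swap_first x y (a @ [c])"
    and hw: "a \<in> hwords n" "c \<le> 2" "d \<le> 2"
    unfolding gamma_adj_def hwords_snoc by auto
  have not_in: "x \<notin> set a" "y \<notin> set a"
    using xy(3) assms by (auto simp: swap_first_snoc split: if_splits)
  then have "b = a" and cd: "c = x \<and> d = y \<or> c = y \<and> d = x"
    using xy(3) assms by (auto simp: swap_first_snoc split: if_splits)
  moreover have "\<forall>e \<in> set a. e = 3 - c - d"
  proof
    fix e assume "e \<in> set a"
    then have "e \<le> 2" "e \<noteq> x" "e \<noteq> y" using hw(1) not_in by (auto simp: hwords_def)
    then show "e = 3 - c - d" using cd xy(1,2) by auto
  qed
  then have "a = replicate n (3 - c - d)"
    using hw(1) by (simp add: hwords_def replicate_eqI)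
  ultimately show "c \<le> 2 \<and> d \<le> 2 \<and> a = replicate n (3 - c - d) \<and> b = a"
    using hw by simp
next
  assume "c \<le> 2 \<and> d \<le> 2 \<and> a = replicate n (3 - c - d) \<and> b = a"
  then have cd: "c \<le> 2" "d \<le> 2" and ab: "a = replicate n (3 - c - d)" "b = a"
    by auto
  note z = third_peg[OF cd assms]
  have "b @ [d] = swap_first (min c d) (max c d) (a @ [c])"
    using ab z assms by (auto simp: swap_first_snoc min_def max_def)
  then show "gamma_adj (Suc n) (a @ [c]) (b @ [d])"
    unfolding gamma_adj_def hwords_snoc using ab cd z assms replicate_in_hwords
    by (intro conjI exI[of _ "min c d"] exI[of _ "max c d"]) (auto simp: min_def max_def)
qed

definition gamma_walk :: "nat \<Rightarrow> nat list list \<Rightarrow> bool" where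
  "gamma_walk n p \<longleftrightarrow> p \<noteq> [] \<and> set p \<subseteq> hwords n \<and> successively (gamma_adj n) p"

lemma gamma_walk_rev: "gamma_walk n (rev p) \<longleftrightarrow> gamma_walk n p"
  unfolding gamma_walk_def successively_rev by (simp add: gamma_adj_commute[of n])

lemma gamma_walk_append:
  "a \<noteq> [] \<Longrightarrow> b \<noteq> [] \<Longrightarrow>
     gamma_walk n (a @ b) \<longleftrightarrow> gamma_walk n a \<and> gamma_walk n b \<and> gamma_adj n (last a) (hd b)"
  unfolding gamma_walk_def by (auto simp: successively_append_iff)

lemma gamma_walk_map_snoc:
  "gamma_walk (Suc n) (map (\<lambda>w. w @ [c]) a) \<longleftrightarrow> gamma_walk n a \<and> c \<le> 2"
  unfolding gamma_walk_def successively_map gamma_adj_snoc_same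
  by (cases a) (auto simp: hwords_snoc successively_Cons successively_mono)

lemma gamma_walk_leave_peg:
  assumes walk: "gamma_walk (Suc n) p" and start: "last (hd p) = x" and finish: "last (last p) \<noteq> x"
  obtains a r c where "p = map (\<lambda>w. w @ [x]) a @ r" "gamma_walk n a" "r \<noteq> []"
    "last (hd r) = c" "c \<noteq> x" "c \<le> 2" "last a = replicate n (3 - x - c)"
proof -
  define a0 where "a0 = takeWhile (\<lambda>w. last w = x) p"
  define r where "r = dropWhile (\<lambda>w. last w = x) p"
  define c where "c = last (hd r)"
  have p: "p = a0 @ r"
    by (simp add: a0_def r_def)
  have p_ne: "p \<noteq> []" and p_hw: "set p \<subseteq> hwords (Suc n)"
    using walk by (auto simp: gamma_walk_def)
  have a0_ne: "a0 \<noteq> []"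
    using p_ne start by (cases p) (auto simp: a0_def)
  have r_ne: "r \<noteq> []"
    using p_ne finish by (auto simp: r_def dropWhile_eq_Nil_conv)
  have cx: "c \<noteq> x"
    using r_ne hd_dropWhile[of "\<lambda>w. last w = x" p] unfolding c_def r_def by simp
  have snoc: "w = butlast w @ [last w]" if "w \<in> set p" for w
    using that p_hw by (cases w rule: rev_cases) (auto simp: hwords_def)
  define a where "a = map butlast a0"
  have a0: "a0 = map (\<lambda>w. w @ [x]) a"
    unfolding a_def map_map comp_def
    by (rule map_idI[symmetric]) (metis a0_def set_takeWhileD snoc)
  have "gamma_walk (Suc n) a0" and adj: "gamma_adj (Suc n) (last a0) (hd r)"
    using walk gamma_walk_append[OF a0_ne r_ne] p by auto
  then have walk_a: "gamma_walk n a"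
    using a0 gamma_walk_map_snoc by auto
  have "last a0 = last a @ [x]"
    using a0 a0_ne by (simp add: last_map)
  moreover have "hd r = butlast (hd r) @ [c]"
    unfolding c_def using r_ne p by (intro snoc) simp
  ultimately have "c \<le> 2 \<and> last a = replicate n (3 - x - c)"
    using adj gamma_adj_snoc_diff[OF cx[symmetric]] by metis
  then show thesis
    using that p a0 walk_a r_ne cx c_def by blast
qed

lemma gamma_walk_enter_peg:
  assumes walk: "gamma_walk (Suc n) p" and finish: "last (last p) = y" and start: "last (hd p) \<noteq> y"
  obtains b r d where "p = r @ map (\<lambda>w. w @ [y]) b" "gamma_walk n b" "r \<noteq> []"
    "last (last r) = d" "d \<noteq> y" "d \<le> 2" "hd b = replicate n (3 - y - d)"
proof -
  have "p \<noteq> []"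
    using walk by (simp add: gamma_walk_def)
  then have "gamma_walk (Suc n) (rev p)" "last (hd (rev p)) = y" "last (last (rev p)) \<noteq> y"
    using walk finish start by (simp_all add: gamma_walk_rev hd_rev last_rev)
  then obtain b r d where "rev p = map (\<lambda>w. w @ [y]) b @ r" "gamma_walk n b" "r \<noteq> []"
    "last (hd r) = d" "d \<noteq> y" "d \<le> 2" "last b = replicate n (3 - y - d)"
    by (rule gamma_walk_leave_peg)
  then show thesis
    using that[of "rev r" "rev b" d] gamma_walk_rev
    by (metis gamma_walk_def hd_rev last_rev rev_is_Nil_conv rev_map rev_append rev_rev_ident)
qed

fun hanoi_path :: "nat \<Rightarrow> nat \<Rightarrow> nat \<Rightarrow> nat list list" where
  "hanoi_path x y 0 = [[]]"
| "hanoi_path x y (Suc n) =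
     map (\<lambda>w. w @ [x]) (hanoi_path x (3 - x - y) n) @ map (\<lambda>w. w @ [y]) (hanoi_path (3 - x - y) y n)"

lemma length_hanoi_path: "length (hanoi_path x y n) = 2 ^ n"
  by (induction n arbitrary: x y) auto

lemma hanoi_path_ne: "hanoi_path x y n \<noteq> []"
  using length_hanoi_path[of x y n] by auto

lemma hd_hanoi_path: "hd (hanoi_path x y n) = replicate n x"
  by (induction n arbitrary: x y) (auto simp: hanoi_path_ne hd_map replicate_append_same)

lemma last_hanoi_path: "last (hanoi_path x y n) = replicate n y"
  by (induction n arbitrary: x y) (auto simp: hanoi_path_ne last_map replicate_append_same)

lemma distinct_hanoi_path:
  "x \<le> 2 \<Longrightarrow> y \<le> 2 \<Longrightarrow> x \<noteq> y \<Longrightarrow> distinct (hanoi_path x y n)"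
proof (induction n arbitrary: x y)
  case (Suc n)
  have "inj (\<lambda>w::nat list. w @ [c])" for c
    by (auto simp: inj_def)
  then show ?case
    using Suc third_peg[OF Suc.prems] by (auto simp: distinct_map inj_on_def)
qed simp

lemma gamma_walk_hanoi_path:
  "x \<le> 2 \<Longrightarrow> y \<le> 2 \<Longrightarrow> x \<noteq> y \<Longrightarrow> gamma_walk n (hanoi_path x y n)"
proof (induction n arbitrary: x y)
  case 0
  then show ?case by (simp add: gamma_walk_def hwords_def)
next
  case (Suc n)
  note z = third_peg[OF Suc.prems]
  have "gamma_adj (Suc n) (replicate n (3 - x - y) @ [x]) (replicate n (3 - x - y) @ [y])"
    using Suc.prems by (simp add: gamma_adj_snoc_diff)
  then show ?case
    using Suc z by (simp add: gamma_walk_append gamma_walk_map_snoc hanoi_path_ne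
        last_map hd_map hd_hanoi_path last_hanoi_path)
qed

lemma hanoi_path_unique_minimal_walk:
  assumes "gamma_walk n p" "hd p = replicate n x" "last p = replicate n y"
    and "x \<le> 2" "y \<le> 2" "x \<noteq> y"
  shows "2 ^ n \<le> length p \<and> (length p = 2 ^ n \<longrightarrow> p = hanoi_path x y n)"
  using assms
proof (induction n arbitrary: x y p)
  case 0
  then have "p \<noteq> []" "set p \<subseteq> {[]}"
    by (auto simp: gamma_walk_def hwords_def)
  then show ?case
    by (cases p) auto
next
  case (Suc n)
  have "last (hd p) = x" "last (last p) = y"
    using Suc.prems(2,3) by simp_all
  then obtain a r c where p_a: "p = map (\<lambda>w. w @ [x]) a @ r" and a: "gamma_walk n a"
    and r: "r \<noteq> []" "last (hd r) = c" and c: "c \<noteq> x" "c \<le> 2"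
    and last_a: "last a = replicate n (3 - x - c)"
    using gamma_walk_leave_peg[OF Suc.prems(1)] Suc.prems(6) by metis
  have "hd a @ [x] = replicate n x @ [x]"
    using a p_a Suc.prems(2) by (auto simp: gamma_walk_def hd_map replicate_append_same)
  then have "hd a = replicate n x"
    by simp
  then have IH_a: "2 ^ n \<le> length a \<and> (length a = 2 ^ n \<longrightarrow> a = hanoi_path x (3 - x - c) n)"
    using Suc.IH[OF a _ last_a] third_peg[OF Suc.prems(4) c(2) c(1)[symmetric]] Suc.prems(4) by metis
  obtain b r' d where p_b: "p = r' @ map (\<lambda>w. w @ [y]) b" and b: "gamma_walk n b"
    and r': "r' \<noteq> []" "last (last r') = d" and d: "d \<noteq> y" "d \<le> 2"
    and hd_b: "hd b = replicate n (3 - y - d)"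
    using gamma_walk_enter_peg[OF Suc.prems(1) \<open>last (last p) = y\<close>] \<open>last (hd p) = x\<close> Suc.prems(6)
    by metis
  have "last b @ [y] = replicate n y @ [y]"
    using b p_b Suc.prems(3) by (auto simp: gamma_walk_def last_map replicate_append_same)
  then have "last b = replicate n y"
    by simp
  then have IH_b: "2 ^ n \<le> length b \<and> (length b = 2 ^ n \<longrightarrow> b = hanoi_path (3 - y - d) y n)"
    using Suc.IH[OF b hd_b] third_peg[OF d(2) Suc.prems(5) d(1)] Suc.prems(5) by metis
  have "set (map (\<lambda>w. w @ [x]) a) \<inter> set (map (\<lambda>w. w @ [y]) b) = {}"
    using Suc.prems(6) by auto
  then have len: "length a + length b \<le> length p"
    using length_append_le_disjoint[of _ r r'] p_a p_b by fastforce
  show ?case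
  proof
    show "2 ^ Suc n \<le> length p"
      using len IH_a IH_b by simp
  next
    show "length p = 2 ^ Suc n \<longrightarrow> p = hanoi_path x y (Suc n)"
    proof
      assume "length p = 2 ^ Suc n"
      then have "length a = 2 ^ n" "length b = 2 ^ n"
        using len IH_a IH_b by simp_all
      moreover from this have "map (\<lambda>w. w @ [x]) a = r'" "r = map (\<lambda>w. w @ [y]) b"
        using p_a p_b \<open>length p = 2 ^ Suc n\<close> by (simp_all add: append_eq_append_conv)
      moreover from this have "c = y" "d = x"
        using a b r r' by (auto simp: gamma_walk_def hd_map last_map)
      ultimately show "p = hanoi_path x y (Suc n)"
        using p_a IH_a IH_b third_peg[OF Suc.prems(4-6)] by simp
    qed
  qed
qed

lemma gamma_path_iff:
  "gamma_path n s t p \<longleftrightarrow> gamma_walk n p \<and> hd p = s \<and> last p = t \<and> distinct p"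
  unfolding gamma_path_def gamma_walk_def successively_conv_nth by auto

lemma gamma_shortest_path_iff_hanoi_path:
  assumes "x \<le> 2" "y \<le> 2" "x \<noteq> y"
  shows "gamma_shortest_path n (replicate n x) (replicate n y) p \<longleftrightarrow> p = hanoi_path x y n"
proof
  assume "gamma_shortest_path n (replicate n x) (replicate n y) p"
  moreover have "gamma_path n (replicate n x) (replicate n y) (hanoi_path x y n)"
    using assms by (simp add: gamma_path_iff gamma_walk_hanoi_path hd_hanoi_path last_hanoi_path
        distinct_hanoi_path)
  ultimately show "p = hanoi_path x y n"
    using hanoi_path_unique_minimal_walk[OF _ _ _ assms] length_hanoi_path
    by (metis gamma_path_iff gamma_shortest_path_def le_antisym)
next
  assume "p = hanoi_path x y n"
  then show "gamma_shortest_path n (replicate n x) (replicate n y) p"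
    using hanoi_path_unique_minimal_walk[OF _ _ _ assms] assms
    by (auto simp: gamma_shortest_path_def gamma_path_iff gamma_walk_hanoi_path hd_hanoi_path
        last_hanoi_path distinct_hanoi_path length_hanoi_path)
qed

lemma bin_rep_Suc: "bin_rep (Suc n) i = bin_rep n i @ [i div 2 ^ n mod 2]"
  by (simp add: bin_rep_def)

lemma bin_rep_mod: "bin_rep n (i mod 2 ^ n) = bin_rep n i"
  by (simp add: bin_rep_def mod2_eq_if even_mod_exp_div_exp_iff)

lemma qmap_bin_rep_hanoi_path:
  "i < 2 ^ n \<Longrightarrow> qmap x y (rev (bin_rep n i)) = rev (hanoi_path x y n ! i)"
proof (induction n arbitrary: x y i)
  case 0
  then show ?case by (simp add: bin_rep_def)
next
  case (Suc n)
  show ?case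
  proof (cases "i < 2 ^ n")
    case True
    then show ?thesis
      using Suc by (simp add: bin_rep_Suc nth_append length_hanoi_path)
  next
    case False
    then have "i div 2 ^ n = 1" "i mod 2 ^ n = i - 2 ^ n"
      using Suc.prems by (simp_all add: div_if mod_if le_div_geq)
    moreover have "i - 2 ^ n < 2 ^ n"
      using Suc.prems by simp
    ultimately show ?thesis
      using False Suc.IH[of "i - 2 ^ n"] bin_rep_mod[of n i]
      by (simp add: bin_rep_Suc nth_append length_hanoi_path)
  qed
qed

theorem mainTheorem13:
  fixes n x y i :: nat
  assumes "n \<ge> 1" and "x \<le> 2" and "y \<le> 2" and "x \<noteq> y" and "i \<le> 2 ^ n - 1"
  shows "qmap x y (rev (bin_rep n i)) = rev (hanoi_C x y n i)"
proof -
  have "i < 2 ^ n"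
    using assms(5) by (simp add: less_eq_iff_succ_less)
  moreover have "hanoi_C x y n i = hanoi_path x y n ! i"
    unfolding hanoi_C_def gamma_shortest_path_iff_hanoi_path[OF assms(2-4)] by simp
  ultimately show ?thesis
    by (simp add: qmap_bin_rep_hanoi_path)
qed

end
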